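(* Let $Q$ be a quantity space over a field $K$ with a basis $\{e_1,\ldots,e_n\}$, and let $x=\mu\cdot\prod_{i=1}^n e_i^{k_i}$ (with $\mu\in K$, $k_i\in\mathbb{Z}$). Then the following are equivalent: (1) $x$ is a non-zero quantity; (2) $\mu\neq0$; (3) $x$ is invertible.
   Context: A scalable monoid over a (unital, associative) ring $R$ is a monoid $X$ (identity $1_X$, product written $xy$) together with a map $R\times X\to X$, $(\alpha,x)\mapsto\alpha\cdot x$, such that $1\cdot x=x$, $\alpha\cdot(\beta\cdot x)=\alpha\beta\cdot x$ and $\alpha\cdot(xy)=(\alpha\cdot x)y=x(\alpha\cdot y)$. A quantity space over a field $K$ is a commutative scalable monoid $Q$ over $K$ for which there exists a basis, i.e. a finite set $\{e_1,\ldots,e_n\}$ of invertible elements of $Q$ such that every $x\in Q$ has a unique expansion $x=\mu\cdot\prod_{i=1}^n e_i^{k_i}$ with $\mu\in K$ and $k_i\in\mathbb{Z}$. Elements of $Q$ are called quantities. A quantity $x$ is a zero quantity if $x=0\cdot x$ (equivalently, $x$ is the zero element $0\cdot y$ of its commensurability class, where $x\sim y$ iff $\alpha\cdot x=\beta\cdot y$ for some $\alpha,\beta\in K$); otherwise it is non-zero. *)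

theory Defs
  imports "HOL-Library.FuncSet"
begin

definition scalable_monoid :: "('k::ring_1 \<Rightarrow> 'q::monoid_mult \<Rightarrow> 'q) \<Rightarrow> bool" where
  "scalable_monoid sc \<longleftrightarrow>
     (\<forall>x. sc 1 x = x) \<and>
     (\<forall>a b x. sc a (sc b x) = sc (a * b) x) \<and>
     (\<forall>a x y. sc a (x * y) = sc a x * y \<and> sc a (x * y) = x * sc a y)"

definition invertible_q :: "'q::monoid_mult \<Rightarrow> bool" where
  "invertible_q x \<longleftrightarrow> (\<exists>y. x * y = 1 \<and> y * x = 1)"

definition qinv :: "'q::monoid_mult \<Rightarrow> 'q" where
  "qinv x = (THE y. x * y = 1 \<and> y * x = 1)"

definition zpow :: "'q::monoid_mult \<Rightarrow> int \<Rightarrow> 'q" where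
  "zpow x k = (if 0 \<le> k then x ^ nat k else qinv x ^ nat (- k))"

definition is_basis :: "('k::field \<Rightarrow> 'q::comm_monoid_mult \<Rightarrow> 'q) \<Rightarrow> 'q set \<Rightarrow> bool" where
  "is_basis sc B \<longleftrightarrow> finite B \<and> (\<forall>e\<in>B. invertible_q e) \<and>
     (\<forall>x. \<exists>!(mu, k). k \<in> extensional B \<and> x = sc mu (\<Prod>e\<in>B. zpow e (k e)))"

definition quantity_space :: "('k::field \<Rightarrow> 'q::comm_monoid_mult \<Rightarrow> 'q) \<Rightarrow> bool" where
  "quantity_space sc \<longleftrightarrow> scalable_monoid sc \<and> (\<exists>B. is_basis sc B)"

definition zero_quantity :: "('k::field \<Rightarrow> 'q \<Rightarrow> 'q) \<Rightarrow> 'q \<Rightarrow> bool" where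
  "zero_quantity sc x \<longleftrightarrow> x = sc 0 x"

end

theory Submission
  imports Defs
begin

text \<open>Write \<open>P = \<Prod>e\<in>B. e\<^bsup>k e\<^esup>\<close>, so \<open>x = \<mu> \<cdot> P\<close> with \<open>P\<close> invertible.
  Since \<open>0 \<cdot> x = 0 \<cdot> P\<close>, \<open>x\<close> is a zero quantity iff \<open>\<mu> \<cdot> P = 0 \<cdot> P\<close>, i.e. iff \<open>\<mu> = 0\<close> by
  uniqueness of the expansion.  For \<open>\<mu> \<noteq> 0\<close> the inverse of \<open>x\<close> is \<open>\<mu>\<inverse> \<cdot> P\<inverse>\<close>.  Conversely,
  if \<open>0 \<cdot> P\<close> were invertible then \<open>0 \<cdot> 1 = 1\<close>, so \<open>0 \<cdot> y = (0 \<cdot> 1) y = y\<close> and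
  \<open>a \<cdot> y = a \<cdot> (0 \<cdot> y) = y\<close> for all \<open>a, y\<close>: every scaling acts trivially.  In particular
  \<open>0 \<cdot> P = 1 \<cdot> P\<close>, contradicting uniqueness of the expansion.\<close>

lemma invertible_q_qinv:
  fixes x :: "'q::monoid_mult"
  assumes "invertible_q x"
  shows "x * qinv x = 1" "qinv x * x = 1" "invertible_q (qinv x)"
proof -
  obtain y where y: "x * y = 1" "y * x = 1"
    using assms unfolding invertible_q_def by blast
  have "\<exists>!y. x * y = 1 \<and> y * x = 1"
  proof (rule ex1I[of _ y])
    fix z assume z: "x * z = 1 \<and> z * x = 1"
    have "z = (y * x) * z" using y by simp
    also have "\<dots> = y" using z by (simp add: mult.assoc)
    finally show "z = y" .
  qed (use y in simp)
  then have "x * qinv x = 1 \<and> qinv x * x = 1"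
    unfolding qinv_def by (rule theI')
  then show "x * qinv x = 1" "qinv x * x = 1" "invertible_q (qinv x)"
    unfolding invertible_q_def by blast+
qed

lemma invertible_q_one: "invertible_q (1::'q::monoid_mult)"
  unfolding invertible_q_def by simp

lemma invertible_q_mult:
  fixes a b :: "'q::monoid_mult"
  assumes "invertible_q a" "invertible_q b"
  shows "invertible_q (a * b)"
proof -
  obtain c where c: "a * c = 1" "c * a = 1" using assms(1) unfolding invertible_q_def by blast
  obtain d where d: "b * d = 1" "d * b = 1" using assms(2) unfolding invertible_q_def by blast
  have "(a * b) * (d * c) = 1" "(d * c) * (a * b) = 1"
    by (simp_all add: mult.assoc flip: mult.assoc[of b] mult.assoc[of c] add: c d)
  then show ?thesis unfolding invertible_q_def by blast
qed

lemma invertible_q_power: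
  fixes a :: "'q::monoid_mult"
  shows "invertible_q a \<Longrightarrow> invertible_q (a ^ n)"
  by (induction n) (auto intro: invertible_q_mult invertible_q_one)

lemma invertible_q_zpow:
  fixes a :: "'q::monoid_mult"
  shows "invertible_q a \<Longrightarrow> invertible_q (zpow a n)"
  unfolding zpow_def by (auto intro: invertible_q_power invertible_q_qinv)

lemma invertible_q_prod:
  fixes f :: "'a \<Rightarrow> 'q::comm_monoid_mult"
  shows "(\<And>e. e \<in> A \<Longrightarrow> invertible_q (f e)) \<Longrightarrow> invertible_q (\<Prod>e\<in>A. f e)"
  by (induction A rule: infinite_finite_induct) (auto intro: invertible_q_mult invertible_q_one)

lemma
  fixes sc :: "'k::ring_1 \<Rightarrow> 'q::monoid_mult \<Rightarrow> 'q"
  assumes "scalable_monoid sc"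
  shows scale_one: "sc 1 x = x"
    and scale_scale: "sc a (sc b x) = sc (a * b) x"
    and scale_mult_left: "sc a (x * y) = sc a x * y"
    and scale_mult_right: "sc a (x * y) = x * sc a y"
  using assms unfolding scalable_monoid_def by blast+

lemma scale_mult_scale:
  fixes sc :: "'k::ring_1 \<Rightarrow> 'q::monoid_mult \<Rightarrow> 'q"
  assumes "scalable_monoid sc"
  shows "sc a x * sc b y = sc (a * b) (x * y)"
  using assms by (simp add: scale_scale flip: scale_mult_left scale_mult_right)

lemma invertible_q_scale:
  fixes sc :: "'k::division_ring \<Rightarrow> 'q::monoid_mult \<Rightarrow> 'q"
  assumes "scalable_monoid sc" "a \<noteq> 0" "invertible_q x"
  shows "invertible_q (sc a x)"
proof -
  obtain y where "x * y = 1" "y * x = 1" using assms(3) unfolding invertible_q_def by blast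
  then have "sc a x * sc (inverse a) y = 1" "sc (inverse a) y * sc a x = 1"
    using assms(1,2) by (simp_all add: scale_mult_scale scale_one)
  then show ?thesis unfolding invertible_q_def by blast
qed

lemma zero_quantity_scale_iff:
  fixes sc :: "'k::field \<Rightarrow> 'q::monoid_mult \<Rightarrow> 'q"
  assumes "scalable_monoid sc"
  shows "zero_quantity sc (sc a x) \<longleftrightarrow> sc a x = sc 0 x"
  using assms unfolding zero_quantity_def by (simp add: scale_scale)

lemma scale_trivial_if_invertible_scale_zero:
  fixes sc :: "'k::ring_1 \<Rightarrow> 'q::monoid_mult \<Rightarrow> 'q"
  assumes sc: "scalable_monoid sc" and "invertible_q (sc 0 x)"
  shows "sc a y = y"
proof -
  obtain z where z: "sc 0 x * z = 1" using assms(2) unfolding invertible_q_def by blast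
  have "sc 0 (x * z) = 1"
    using z scale_mult_left[OF sc] by simp
  then have zero_one: "sc 0 1 = 1"
    using scale_scale[OF sc, of 0 0 "x * z"] by simp
  have "sc 0 y = y"
    using sc scale_mult_left[OF sc, of 0 1 y] by (simp add: zero_one)
  then show ?thesis
    using scale_scale[OF sc, of a 0 y] by simp
qed

lemma is_basis_scalar_unique:
  assumes "is_basis sc B"
    and "sc a (\<Prod>e\<in>B. zpow e (k e)) = sc b (\<Prod>e\<in>B. zpow e (k e))"
  shows "a = b"
proof -
  let ?r = "restrict k B"
  define expansion where
    "expansion = (\<lambda>(m, l). l \<in> extensional B \<and>
       sc a (\<Prod>e\<in>B. zpow e (k e)) = sc m (\<Prod>e\<in>B. zpow e (l e)))"
  have "\<exists>\<^sub>\<le>\<^sub>1 p. expansion p"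
    using assms(1) unfolding is_basis_def expansion_def ex1_iff_ex_Uniq by blast
  moreover have "(\<Prod>e\<in>B. zpow e (k e)) = (\<Prod>e\<in>B. zpow e (?r e))"
    by (rule prod.cong) auto
  then have "expansion (a, ?r)" "expansion (b, ?r)"
    using assms(2) unfolding expansion_def by simp_all
  ultimately have "(a, ?r) = (b, ?r)"
    by (rule Uniq_D)
  then show ?thesis by simp
qed

theorem proposition3p4:
  fixes sc :: "'k::field \<Rightarrow> 'q::comm_monoid_mult \<Rightarrow> 'q"
    and B :: "'q set" and mu :: 'k and k :: "'q \<Rightarrow> int" and x :: 'q
  assumes "quantity_space sc"
    and "is_basis sc B"
    and "x = sc mu (\<Prod>e\<in>B. zpow e (k e))"
  shows "(\<not> zero_quantity sc x \<longleftrightarrow> mu \<noteq> 0) \<and> (mu \<noteq> 0 \<longleftrightarrow> invertible_q x)"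
proof -
  define P where "P = (\<Prod>e\<in>B. zpow e (k e))"
  have sc: "scalable_monoid sc" using assms(1) unfolding quantity_space_def by blast
  have x: "x = sc mu P" using assms(3) P_def by simp
  have unique: "sc a P = sc b P \<Longrightarrow> a = b" for a b
    using is_basis_scalar_unique[OF assms(2)] P_def by blast
  have P_invertible: "invertible_q P"
    using assms(2) unfolding P_def is_basis_def by (auto intro: invertible_q_prod invertible_q_zpow)
  have "zero_quantity sc x \<longleftrightarrow> mu = 0"
    using zero_quantity_scale_iff[OF sc] unique x by blast
  moreover have "invertible_q x" if "mu \<noteq> 0"
    using invertible_q_scale[OF sc that P_invertible] x by simp
  moreover have "mu \<noteq> 0" if "invertible_q x"
  proof
    assume "mu = 0"
    then have "sc 0 P = sc 1 P"
      using scale_trivial_if_invertible_scale_zero[OF sc] that x by metis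
    then show False using unique by fastforce
  qed
  ultimately show ?thesis by blast
qed

end
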